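(* For all integers $m\ge1$ and $r\ge0$: (i) for all $n,k\ge0$, $w_{m,r}(n+1,k+1)=\sum_{j\ge0}\frac{n+1}{k+1}\binom{k+j}{j}\mathcal B_j\,m^j\,w_{m,r}(n,k+j)$ (a finite sum since $w_{m,r}(n,i)=0$ for $i>n$); (ii) for all $n\ge1$ and $1\le k\le n$, $$w_{m,r}(n,k)+r\sum_{l=0}^{n-1}\binom{n-1}{l}(n-l-1)!\,w_{m,r}(l,k)(-m)^{n-l-1}=\sum_{l=k}^n\binom{n-1}{l-1}(-m)^{n-l}(n-l)!\,w_{m,r}(l-1,k-1);$$ (iii) for all $n\ge1$ and $1\le k\le n$, $k\,w_{m,r}(n,k)=\sum_{l=k}^n\binom{n}{l-1}(-m)^{n-l}(n-l)!\,w_{m,r}(l-1,k-1)$.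
   Context: For integers $m\ge1$, $n,k,r\ge0$, the $r$-Whitney numbers of the first kind $w_{m,r}(n,k)$ are defined by $\sum_{n\ge k}w_{m,r}(n,k)\frac{z^n}{n!}=(1+mz)^{-r/m}\frac{\ln^k(1+mz)}{m^kk!}$ (and $w_{m,r}(n,k)=0$ for $k>n$). The Bernoulli numbers $\mathcal B_n$ are defined by $\frac{t}{e^t-1}=\sum_{n\ge0}\mathcal B_n\frac{t^n}{n!}$. *)

theory Defs
  imports "HOL-Computational_Algebra.Formal_Power_Series"
begin

definition whitney1_egf :: "nat \<Rightarrow> nat \<Rightarrow> nat \<Rightarrow> real fps" where
  "whitney1_egf m r k =
     (fps_binomial (- real r / real m) oo (fps_const (real m) * fps_X))
     * ((fps_ln 1 oo (fps_const (real m) * fps_X)) ^ k)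
     * fps_const (1 / (real m ^ k * fact k))"

definition whitney1 :: "nat \<Rightarrow> nat \<Rightarrow> nat \<Rightarrow> nat \<Rightarrow> real" where
  "whitney1 m r n k = fact n * fps_nth (whitney1_egf m r k) n"

definition bernoulli_num :: "nat \<Rightarrow> real" where
  "bernoulli_num n = fact n * fps_nth (fps_X / (fps_exp 1 - 1)) n"

end

theory Submission
  imports Defs
begin

text \<open>
  Write L = ln(1 + c z) and F_k = (1 + c z)^a L^k / (c^k k!), so that w_{m,r}(n,k) = n! [z^n] F_k
  for c = m, a = -r/m; every product L^j F_k is a constant multiple of F_{k+j}.
  (i) Since B(t) (e^t - 1) = t for the Bernoulli series B and e^L - 1 = c z, we have L = c z B(L);
  expanding L F_k = c z B(L) F_k in powers of L gives the recurrence.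
  (ii) F_k satisfies (1 + c z) F_k' = c a F_k + F_{k-1}; dividing by 1 + c z turns the coefficients
  of the right-hand side into convolutions with the geometric series (-c)^n.
  (iii) Compare coefficients in c k F_k = L F_{k-1}, using [z^n] L = c^n (-1)^(n-1) / n.
\<close>

unbundle fps_syntax

definition fps_ln_scaled :: "'a::field_char_0 \<Rightarrow> 'a fps" where
  "fps_ln_scaled c = fps_ln 1 oo (fps_const c * fps_X)"

definition fps_binomial_scaled :: "'a::field_char_0 \<Rightarrow> 'a \<Rightarrow> 'a fps" where
  "fps_binomial_scaled a c = fps_binomial a oo (fps_const c * fps_X)"

definition fps_geometric :: "'a::comm_ring_1 \<Rightarrow> 'a fps" where
  "fps_geometric c = Abs_fps (\<lambda>n. (- c) ^ n)"

definition bernoulli_fps :: "'a::field_char_0 fps" where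
  "bernoulli_fps = fps_X / (fps_exp 1 - 1)"

definition whitney_egf :: "'a::field_char_0 \<Rightarrow> 'a \<Rightarrow> nat \<Rightarrow> 'a fps" where
  "whitney_egf c a k =
     fps_binomial_scaled a c * fps_ln_scaled c ^ k * fps_const (1 / (c ^ k * fact k))"

definition whitney :: "'a::field_char_0 \<Rightarrow> 'a \<Rightarrow> nat \<Rightarrow> nat \<Rightarrow> 'a" where
  "whitney c a n k = fact n * whitney_egf c a k $ n"

lemma fact_eq_binomial_mult_fact:
  "i \<le> n \<Longrightarrow>
     (fact n :: 'a::{comm_semiring_1,semiring_char_0}) = of_nat (n choose i) * fact i * fact (n - i)"
  using arg_cong [OF binomial_fact_lemma [symmetric], of i n "of_nat :: nat \<Rightarrow> 'a"]
  by (simp add: ac_simps)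

lemma fps_compose_mult_nth:
  fixes f b g :: "'a::comm_ring_1 fps"
  assumes "b $ 0 = 0"
  shows "((f oo b) * g) $ n = (\<Sum>j\<le>n. f $ j * (b ^ j * g) $ n)"
proof -
  have "((f oo b) * g) $ n = (\<Sum>i=0..n. \<Sum>j=0..i. f $ j * b ^ j $ i * g $ (n - i))"
    by (simp add: fps_mult_nth fps_compose_nth sum_distrib_right)
  also have "\<dots> = (\<Sum>i=0..n. \<Sum>j=0..n. f $ j * b ^ j $ i * g $ (n - i))"
    using startsby_zero_power_prefix [OF assms]
    by (intro sum.cong refl sum.mono_neutral_left) auto
  also have "\<dots> = (\<Sum>j\<le>n. f $ j * (b ^ j * g) $ n)"
    by (subst sum.swap) (simp add: fps_mult_nth sum_distrib_left mult.assoc atLeast0AtMost)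
  finally show ?thesis .
qed

lemma fps_ln_scaled_nth: "fps_ln_scaled c $ n = c ^ n * fps_ln 1 $ n"
  by (simp add: fps_ln_scaled_def fps_compose_linear)

lemma fps_ln_scaled_nth_0 [simp]: "fps_ln_scaled c $ 0 = 0"
  by (simp add: fps_ln_scaled_nth)

lemma fps_binomial_scaled_nth: "fps_binomial_scaled a c $ n = c ^ n * (a gchoose n)"
  by (simp add: fps_binomial_scaled_def fps_compose_linear)

lemma fps_geometric_inverse: "(1 + fps_const c * fps_X) * fps_geometric c = 1"
proof (rule fps_ext)
  show "((1 + fps_const c * fps_X) * fps_geometric c) $ n = 1 $ n" for n
    by (cases n) (simp_all add: fps_geometric_def distrib_right mult.assoc)
qed

lemma fps_deriv_ln_scaled: "fps_deriv (fps_ln_scaled c) = fps_const c * fps_geometric c"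
proof (rule fps_ext)
  show "fps_deriv (fps_ln_scaled c) $ n = (fps_const c * fps_geometric c) $ n" for n
    by (simp add: fps_ln_scaled_nth fps_ln_nth fps_geometric_def power_minus' del: of_nat_Suc)
qed

lemma fps_binomial_scaled_ode:
  "(1 + fps_const c * fps_X) * fps_deriv (fps_binomial_scaled a c)
     = fps_const (c * a) * fps_binomial_scaled a c"
proof (rule fps_ext)
  fix n
  have "((1 + fps_const c * fps_X) * fps_deriv (fps_binomial_scaled a c)) $ n
      = c ^ Suc n * (of_nat n * (a gchoose n) + of_nat (Suc n) * (a gchoose Suc n))"
    by (cases n) (simp_all add: fps_binomial_scaled_nth distrib_right algebra_simps del: of_nat_Suc)
  also have "\<dots> = (c * a) * (c ^ n * (a gchoose n))"
    by (simp only: gbinomial_mult_1 [symmetric] power_Suc mult_ac)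
  also have "\<dots> = (fps_const (c * a) * fps_binomial_scaled a c) $ n"
    by (simp add: fps_binomial_scaled_nth)
  finally show "((1 + fps_const c * fps_X) * fps_deriv (fps_binomial_scaled a c)) $ n
      = (fps_const (c * a) * fps_binomial_scaled a c) $ n" .
qed

lemma bernoulli_fps_compose_ln_scaled:
  "(bernoulli_fps oo fps_ln_scaled c) * (fps_const c * fps_X) = fps_ln_scaled (c :: 'a::field_char_0)"
proof -
  have "bernoulli_fps * (fps_exp 1 - 1) = (fps_X :: 'a fps)"
    unfolding bernoulli_fps_def by (simp add: fps_dvd_iff subdegree_leI)
  moreover have "(fps_exp 1 - 1) oo fps_ln_scaled c = fps_const c * fps_X"
  proof -
    have "(fps_exp 1 - 1) oo fps_ln_scaled c = ((fps_exp 1 - 1) oo fps_ln 1) oo (fps_const c * fps_X)"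
      unfolding fps_ln_scaled_def by (rule fps_compose_assoc) auto
    also have "(fps_exp 1 - 1) oo fps_ln 1 = (fps_X :: 'a fps)"
      by (simp add: fps_ln_fps_exp_inv fps_inv_right)
    finally show ?thesis by simp
  qed
  ultimately show ?thesis
    using fps_compose_mult_distrib [of "fps_ln_scaled c" bernoulli_fps "fps_exp 1 - 1"] by simp
qed

lemma whitney_egf_nth_below: "j < k \<Longrightarrow> whitney_egf c a k $ j = 0"
  unfolding whitney_egf_def fps_mult_nth
  by (intro sum.neutral) (auto simp: startsby_zero_power_prefix)

lemma whitney_below: "n < k \<Longrightarrow> whitney c a n k = 0"
  by (simp add: whitney_def whitney_egf_nth_below)

lemma fps_ln_scaled_power_mult_whitney_egf:
  assumes "c \<noteq> 0"
  shows "fps_ln_scaled c ^ j * whitney_egf c a k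
           = fps_const (c ^ j * fact (k + j) / fact k) * whitney_egf c a (k + j)"
proof -
  have "fps_const (c ^ j * fact (k + j) / fact k) * whitney_egf c a (k + j)
      = fps_const (c ^ j * fact (k + j) / fact k * (1 / (c ^ (k + j) * fact (k + j))))
        * (fps_binomial_scaled a c * fps_ln_scaled c ^ k * fps_ln_scaled c ^ j)"
    by (simp add: whitney_egf_def ac_simps power_add)
  also have "c ^ j * fact (k + j) / fact k * (1 / (c ^ (k + j) * fact (k + j))) = 1 / (c ^ k * fact k)"
    using assms by (simp add: field_simps power_add)
  finally show ?thesis
    by (simp only: whitney_egf_def mult_ac)
qed

lemma fps_ln_scaled_mult_whitney_egf:
  assumes "c \<noteq> 0"
  shows "fps_ln_scaled c * whitney_egf c a k = fps_const (c * of_nat (Suc k)) * whitney_egf c a (Suc k)"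
  using fps_ln_scaled_power_mult_whitney_egf [OF assms, of 1 a k] by simp

lemma whitney_egf_ode:
  assumes "c \<noteq> 0"
  shows "(1 + fps_const c * fps_X) * fps_deriv (whitney_egf c a (Suc k))
           = fps_const (c * a) * whitney_egf c a (Suc k) + whitney_egf c a k"
proof -
  let ?Q = "1 + fps_const c * fps_X" and ?P = "fps_binomial_scaled a c" and ?L = "fps_ln_scaled c"
  let ?K = "fps_const (1 / (c ^ Suc k * fact (Suc k)))"
  have QL: "?Q * fps_deriv ?L = fps_const c"
    by (metis fps_deriv_ln_scaled fps_geometric_inverse mult.left_commute mult.right_neutral)
  have "fps_deriv (whitney_egf c a (Suc k))
      = (fps_deriv ?P * ?L ^ Suc k + ?P * (fps_const (of_nat (Suc k)) * fps_deriv ?L * ?L ^ k)) * ?K"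
    by (simp add: whitney_egf_def fps_deriv_power del: of_nat_Suc power_Suc)
  then have "?Q * fps_deriv (whitney_egf c a (Suc k))
      = (?Q * fps_deriv ?P) * ?L ^ Suc k * ?K
        + ?P * fps_const (of_nat (Suc k)) * (?Q * fps_deriv ?L) * ?L ^ k * ?K"
    by (simp only: algebra_simps)
  also have "\<dots> = fps_const (c * a) * whitney_egf c a (Suc k)
      + ?P * ?L ^ k * fps_const (of_nat (Suc k) * c * (1 / (c ^ Suc k * fact (Suc k))))"
    unfolding fps_binomial_scaled_ode QL
    by (simp add: whitney_egf_def ac_simps del: of_nat_Suc power_Suc)
  also have "of_nat (Suc k) * c * (1 / (c ^ Suc k * fact (Suc k))) = 1 / (c ^ k * fact k)"
    using assms by (simp add: field_simps del: of_nat_Suc)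
  finally show ?thesis
    by (simp add: whitney_egf_def)
qed

lemma fps_deriv_whitney_egf:
  assumes "c \<noteq> 0"
  shows "fps_deriv (whitney_egf c a (Suc k))
           = (fps_const (c * a) * whitney_egf c a (Suc k) + whitney_egf c a k) * fps_geometric c"
proof -
  have "fps_deriv (whitney_egf c a (Suc k))
      = (fps_geometric c * (1 + fps_const c * fps_X)) * fps_deriv (whitney_egf c a (Suc k))"
    by (simp only: fps_geometric_inverse mult.commute [of "fps_geometric c"] mult_1_left)
  also have "\<dots> = fps_geometric c * (fps_const (c * a) * whitney_egf c a (Suc k) + whitney_egf c a k)"
    by (simp only: mult.assoc whitney_egf_ode [OF assms])
  finally show ?thesis
    by (simp only: mult.commute)
qed

lemma whitney_sum_shift:
  assumes "1 \<le> k"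
  shows "(\<Sum>l=k..n. f l * whitney c a (l - 1) (k - 1)) = (\<Sum>i<n. f (Suc i) * whitney c a i (k - 1))"
proof -
  have "(\<Sum>l=k..n. f l * whitney c a (l - 1) (k - 1)) = (\<Sum>l=1..n. f l * whitney c a (l - 1) (k - 1))"
    using assms by (intro sum.mono_neutral_left) (auto simp: whitney_below)
  also have "\<dots> = (\<Sum>i<n. f (Suc i) * whitney c a i (k - 1))"
    using sum.atLeast1_atMost_eq [of "\<lambda>l. f l * whitney c a (l - 1) (k - 1)" n] by simp
  finally show ?thesis .
qed

lemma whitney_vertical_recurrence:
  fixes c a :: "'a::field_char_0"
  assumes c: "c \<noteq> 0" and k: "1 \<le> k"
  shows "of_nat k * whitney c a n k
           = (\<Sum>l=k..n. of_nat (n choose (l - 1)) * (- c) ^ (n - l) * fact (n - l)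
                 * whitney c a (l - 1) (k - 1))"
proof -
  obtain j where j: "k = Suc j" using k by (cases k) auto
  let ?F = "whitney_egf c a j" and ?L = "fps_ln_scaled c"
  have "of_nat k * whitney_egf c a k $ n = (?F * ?L) $ n / c"
    using arg_cong [OF fps_ln_scaled_mult_whitney_egf [OF c, of a j], of "\<lambda>f. f $ n"] c
    by (simp add: j mult.commute field_simps del: of_nat_Suc)
  also have "(?F * ?L) $ n = (\<Sum>i<n. ?F $ i * ?L $ (n - i))"
    by (simp add: fps_mult_nth atLeast0AtMost lessThan_Suc_atMost [symmetric] del: lessThan_Suc_atMost)
  finally have "of_nat k * whitney c a n k = (\<Sum>i<n. fact n * (?F $ i * ?L $ (n - i)) / c)"
    by (simp add: whitney_def sum_distrib_left sum_divide_distrib ac_simps)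
  also have "\<dots> = (\<Sum>i<n. of_nat (n choose i) * (- c) ^ (n - Suc i) * fact (n - Suc i) * whitney c a i j)"
  proof (rule sum.cong [OF refl])
    fix i assume "i \<in> {..<n}"
    then obtain d where n: "n = i + Suc d" by (auto dest: less_imp_Suc_add)
    have "fact n = of_nat (n choose i) * fact i * (of_nat (Suc d) * fact d :: 'a)"
      using fact_eq_binomial_mult_fact [of i n] by (simp add: n)
    then show "fact n * (?F $ i * ?L $ (n - i)) / c
        = of_nat (n choose i) * (- c) ^ (n - Suc i) * fact (n - Suc i) * whitney c a i j"
      using c by (simp add: n fps_ln_scaled_nth fps_ln_nth whitney_def power_minus' field_simps del: of_nat_Suc)
  qed
  also have "\<dots> = (\<Sum>l=k..n. of_nat (n choose (l - 1)) * (- c) ^ (n - l) * fact (n - l)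
                 * whitney c a (l - 1) (k - 1))"
    by (subst whitney_sum_shift [OF k]) (simp add: j)
  finally show ?thesis .
qed

lemma whitney_convolution_recurrence:
  fixes c a :: "'a::field_char_0"
  assumes c: "c \<noteq> 0" and r: "c * a = - r" and n: "1 \<le> n" and k: "1 \<le> k"
  shows "whitney c a n k + r * (\<Sum>l=0..n-1. of_nat ((n - 1) choose l) * fact (n - l - 1)
                 * whitney c a l k * (- c) ^ (n - l - 1))
           = (\<Sum>l=k..n. of_nat ((n - 1) choose (l - 1)) * (- c) ^ (n - l) * fact (n - l)
                 * whitney c a (l - 1) (k - 1))"
proof -
  obtain j where j: "k = Suc j" using k by (cases k) auto
  obtain p where p: "n = Suc p" using n by (cases n) auto
  let ?F = "whitney_egf c a k" and ?G = "whitney_egf c a j"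
  let ?A = "\<lambda>i. of_nat (p choose i) * fact (p - i) * whitney c a i k * (- c) ^ (p - i)"
  let ?B = "\<lambda>i. of_nat (p choose i) * (- c) ^ (n - Suc i) * fact (n - Suc i) * whitney c a i j"
  have deriv: "of_nat n * ?F $ n = (\<Sum>i=0..p. (c * a * ?F $ i + ?G $ i) * (- c) ^ (p - i))"
    using arg_cong [OF fps_deriv_whitney_egf [OF c, of a j], of "\<lambda>f. f $ p"]
    unfolding fps_mult_nth [where g = "fps_geometric c"]
    by (simp add: j p fps_geometric_def del: of_nat_Suc)
  have "whitney c a n k = fact p * (of_nat n * ?F $ n)"
    by (simp add: whitney_def p)
  also have "\<dots> = (\<Sum>i=0..p. fact p * ((c * a * ?F $ i + ?G $ i) * (- c) ^ (p - i)))"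
    by (simp only: deriv sum_distrib_left)
  also have "\<dots> = (\<Sum>i=0..p. c * a * ?A i + ?B i)"
  proof (rule sum.cong [OF refl])
    fix i assume "i \<in> {0..p}"
    then have "fact p = of_nat (p choose i) * fact i * (fact (p - i) :: 'a)"
      by (intro fact_eq_binomial_mult_fact) simp
    then show "fact p * ((c * a * ?F $ i + ?G $ i) * (- c) ^ (p - i)) = c * a * ?A i + ?B i"
      by (simp add: whitney_def p algebra_simps)
  qed
  also have "\<dots> = c * a * (\<Sum>l=0..n-1. ?A l) + (\<Sum>i<n. ?B i)"
    by (simp add: sum.distrib sum_distrib_left distrib_left p atLeast0AtMost lessThan_Suc_atMost [symmetric]
             del: lessThan_Suc_atMost)
  also have "(\<Sum>i<n. ?B i) = (\<Sum>l=k..n. of_nat ((n - 1) choose (l - 1)) * (- c) ^ (n - l) * fact (n - l)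
                 * whitney c a (l - 1) (k - 1))"
    by (subst whitney_sum_shift [OF k]) (simp add: j p)
  finally show ?thesis
    by (simp add: p r)
qed

lemma whitney_bernoulli_recurrence:
  fixes c a :: "'a::field_char_0"
  assumes c: "c \<noteq> 0"
  shows "whitney c a (n + 1) (k + 1)
           = (\<Sum>j\<le>n. of_nat (n + 1) / of_nat (k + 1) * of_nat ((k + j) choose j)
                 * (fact j * bernoulli_fps $ j) * c ^ j * whitney c a n (k + j))"
proof -
  let ?L = "fps_ln_scaled c" and ?F = "whitney_egf c a k"
  let ?H = "(bernoulli_fps oo ?L) * ?F"
  have "fps_const (c * of_nat (Suc k)) * whitney_egf c a (Suc k) = ?L * ?F"
    by (rule fps_ln_scaled_mult_whitney_egf [OF c, symmetric])
  also have "\<dots> = fps_X * (fps_const c * ?H)"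
    by (subst (1) bernoulli_fps_compose_ln_scaled [symmetric]) (simp only: mult_ac)
  finally have egf: "fps_const (c * of_nat (Suc k)) * whitney_egf c a (Suc k) = fps_X * (fps_const c * ?H)" .
  have "c * (of_nat (Suc k) * whitney_egf c a (Suc k) $ Suc n) = c * ?H $ n"
    using arg_cong [OF egf, of "\<lambda>f. f $ Suc n"] by (simp del: of_nat_Suc)
  then have "of_nat (Suc k) * whitney_egf c a (Suc k) $ Suc n = ?H $ n"
    using c by simp
  also have "?H $ n = (\<Sum>j\<le>n. bernoulli_fps $ j * (?L ^ j * ?F) $ n)"
    by (rule fps_compose_mult_nth) simp
  also have "\<dots> = (\<Sum>j\<le>n. bernoulli_fps $ j * (c ^ j * fact (k + j) / fact k * whitney_egf c a (k + j) $ n))"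
    by (simp add: fps_ln_scaled_power_mult_whitney_egf [OF c])
  finally have coeff: "of_nat (Suc k) * whitney_egf c a (Suc k) $ Suc n
      = (\<Sum>j\<le>n. bernoulli_fps $ j * (c ^ j * fact (k + j) / fact k * whitney_egf c a (k + j) $ n))" .
  have "whitney c a (n + 1) (k + 1)
      = fact (Suc n) / of_nat (Suc k) * (of_nat (Suc k) * whitney_egf c a (Suc k) $ Suc n)"
    by (simp add: whitney_def del: of_nat_Suc)
  also have "\<dots> = (\<Sum>j\<le>n. of_nat (n + 1) / of_nat (k + 1) * of_nat ((k + j) choose j)
                 * (fact j * bernoulli_fps $ j) * c ^ j * whitney c a n (k + j))"
    unfolding coeff sum_distrib_left
  proof (rule sum.cong [OF refl])
    fix j
    have "fact (k + j) = of_nat ((k + j) choose j) * fact j * (fact k :: 'a)"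
      using fact_eq_binomial_mult_fact [of j "k + j"] by simp
    then show "fact (Suc n) / of_nat (Suc k)
          * (bernoulli_fps $ j * (c ^ j * fact (k + j) / fact k * whitney_egf c a (k + j) $ n))
        = of_nat (n + 1) / of_nat (k + 1) * of_nat ((k + j) choose j)
          * (fact j * bernoulli_fps $ j) * c ^ j * whitney c a n (k + j)"
      by (simp add: whitney_def field_simps del: of_nat_Suc)
  qed
  finally show ?thesis .
qed

lemma bernoulli_num_eq: "bernoulli_num j = fact j * bernoulli_fps $ j"
  by (simp add: bernoulli_num_def bernoulli_fps_def)

lemma whitney1_eq_whitney: "whitney1 m r = whitney (real m) (- real r / real m)"
  by (simp add: fun_eq_iff whitney1_def whitney1_egf_def whitney_def whitney_egf_def
                fps_binomial_scaled_def fps_ln_scaled_def)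

theorem mainTheorem19:
  fixes m r :: nat
  assumes "m \<ge> 1"
  shows "(\<forall>n k. whitney1 m r (n + 1) (k + 1) =
            (\<Sum>j\<le>n. real (n + 1) / real (k + 1) * real ((k + j) choose j)
                 * bernoulli_num j * real m ^ j * whitney1 m r n (k + j)))
       \<and> (\<forall>n k. 1 \<le> n \<longrightarrow> 1 \<le> k \<longrightarrow> k \<le> n \<longrightarrow>
            whitney1 m r n k + real r * (\<Sum>l=0..n-1. real ((n - 1) choose l) * fact (n - l - 1)
                 * whitney1 m r l k * (- real m) ^ (n - l - 1))
            = (\<Sum>l=k..n. real ((n - 1) choose (l - 1)) * (- real m) ^ (n - l) * fact (n - l)
                 * whitney1 m r (l - 1) (k - 1)))
       \<and> (\<forall>n k. 1 \<le> n \<longrightarrow> 1 \<le> k \<longrightarrow> k \<le> n \<longrightarrow>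
            real k * whitney1 m r n k
            = (\<Sum>l=k..n. real (n choose (l - 1)) * (- real m) ^ (n - l) * fact (n - l)
                 * whitney1 m r (l - 1) (k - 1)))"
proof -
  have m: "real m \<noteq> 0" using assms by simp
  then have r: "real m * (- real r / real m) = - real r" by simp
  show ?thesis
    unfolding whitney1_eq_whitney bernoulli_num_eq
    by (intro conjI allI impI whitney_bernoulli_recurrence whitney_convolution_recurrence
          whitney_vertical_recurrence m r)
qed

end
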